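(* Let $I\ge 2$ and let $\bar A_1,\dots,\bar A_I$ be arrival processes such that each $\bar A_i$ is $(\lambda_i,\nu_i)$-constrained, with $\lambda_i>0$, $\nu_i\ge0$. Then their superposition $\bar A$ is $(\lambda,\nu)$-constrained with $$\lambda=\sum_{i=1}^I\lambda_i,\qquad \nu=\sum_{i=1}^I\nu_i+(I-1).$$
   Context: An arrival process is described by its arrival time function: a nondecreasing sequence $(\bar A(n))_{n\ge 1}$ of nonnegative real numbers, where $\bar A(n)$ is the arrival time of packet $n$. By convention $\bar A(0)=0$, and $\bar A(m,n):=\bar A(n)-\bar A(m)$ for integers $n\ge m\ge 0$. Write $x^+=\max\{x,0\}$. For constants $\lambda>0$ and $\nu\ge 0$, the process is called $(\lambda,\nu)$-constrained if $\bar A(m,n)\ge \frac{1}{\lambda}(n-m-\nu)^+$ for all integers $n\ge m\ge 0$. The superposition (aggregate) of arrival processes $\bar A_1,\dots,\bar A_I$ (each with $\bar A_i(0)=0$) is the arrival process $\bar A$ given by $\bar A(n)=\inf\{\max_{1\le i\le I}\bar A_i(m_i): m_1,\dots,m_I\ge 0 \text{ integers},\ m_1+\cdots+m_I=n\}$ for $n\ge 0$; equivalently, $\bar A(n)$ is the $n$-th smallest element (counted with multiplicity) of the multiset of all packet arrival times $\{\bar A_i(k): 1\le i\le I,\ k\ge 1\}$. *)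

theory Defs
  imports "HOL-Analysis.Analysis"
begin

text \<open>An arrival process: arrival time function A : nat => real, nondecreasing,
  nonnegative, with the convention A 0 = 0.\<close>
definition arrival_process :: "(nat \<Rightarrow> real) \<Rightarrow> bool" where
  "arrival_process A \<longleftrightarrow> A 0 = 0 \<and> mono A \<and> (\<forall>n. 0 \<le> A n)"

definition constrained :: "real \<Rightarrow> real \<Rightarrow> (nat \<Rightarrow> real) \<Rightarrow> bool" where
  "constrained lam nu A \<longleftrightarrow>
     (\<forall>m n. m \<le> n \<longrightarrow> A n - A m \<ge> (1 / lam) * max (real n - real m - nu) 0)"

definition superposition :: "nat \<Rightarrow> (nat \<Rightarrow> nat \<Rightarrow> real) \<Rightarrow> nat \<Rightarrow> real" where
  "superposition I As n =
     Inf {Max ((\<lambda>i. As i (m i)) ` {..<I}) | m :: nat \<Rightarrow> nat. (\<Sum>i<I. m i) = n}"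

end

theory Submission
  imports Defs
begin

text \<open>Take a split \<open>k\<^sub>1 + \<dots> + k\<^sub>I = n\<close> with all \<open>A\<^sub>i(k\<^sub>i) \<le> T\<close>, and let
  \<open>d = (n - m - \<nu>)\<^sup>+ / \<lambda>\<close>. Each source \<open>i\<close> can move back about \<open>\<lambda>\<^sub>i d + \<nu>\<^sub>i\<close> packets
  while gaining at least \<open>d\<close> in time; rounding down costs less than one packet per source,
  which is what the term \<open>I - 1\<close> in \<open>\<nu>\<close> pays for. The moved-back counts still add up to at
  least \<open>m\<close>, so after trimming them to a split of \<open>m\<close> all arrival times are \<open>\<le> T - d\<close>.
  Taking the infimum over splits gives \<open>A(m) + d \<le> A(n)\<close>.\<close>

lemma exists_pointwise_le_sum_eq:
  fixes j :: "nat \<Rightarrow> nat"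
  assumes "m \<le> (\<Sum>i<I. j i)"
  shows "\<exists>j'. (\<forall>i. j' i \<le> j i) \<and> (\<Sum>i<I. j' i) = m"
  using assms
proof (induction I arbitrary: m)
  case 0
  then show ?case by (intro exI[of _ "\<lambda>_. 0"]) auto
next
  case (Suc I)
  show ?case
  proof (cases "m \<le> j I")
    case True
    then show ?thesis by (intro exI[of _ "\<lambda>i. if i = I then m else 0"]) auto
  next
    case False
    with Suc.prems have "m - j I \<le> (\<Sum>i<I. j i)" by simp
    from Suc.IH[OF this] obtain j'' where j'': "\<forall>i. j'' i \<le> j i" "(\<Sum>i<I. j'' i) = m - j I"
      by blast
    have "(\<Sum>i<I. (j''(I := j I)) i) = (\<Sum>i<I. j'' i)" by (intro sum.cong) auto
    with j'' False show ?thesis by (intro exI[of _ "j''(I := j I)"]) auto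
  qed
qed

lemma constrained_increment:
  assumes "constrained lam nu A" "lam > 0" "m \<le> n"
  shows "real n - real m - nu \<le> lam * (A n - A m)"
proof -
  have "(1 / lam) * (real n - real m - nu) \<le> (1 / lam) * max (real n - real m - nu) 0"
    using assms(2) by (intro mult_left_mono) auto
  also have "\<dots> \<le> A n - A m"
    using assms(1,3) unfolding constrained_def by blast
  finally show ?thesis using assms(2) by (simp add: field_simps)
qed

locale constrained_arrivals =
  fixes I :: nat and As :: "nat \<Rightarrow> nat \<Rightarrow> real" and lam nu :: "nat \<Rightarrow> real"
  assumes sources_nonempty: "0 < I"
    and arrival: "\<And>i. i < I \<Longrightarrow> arrival_process (As i)"
    and lam_pos: "\<And>i. i < I \<Longrightarrow> lam i > 0"
    and nu_nonneg: "\<And>i. i < I \<Longrightarrow> nu i \<ge> 0"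
    and constr: "\<And>i. i < I \<Longrightarrow> constrained (lam i) (nu i) (As i)"
begin

lemma As_0: "i < I \<Longrightarrow> As i 0 = 0"
  and As_mono: "i < I \<Longrightarrow> mono (As i)"
  and As_nonneg: "i < I \<Longrightarrow> 0 \<le> As i k"
  using arrival unfolding arrival_process_def by auto

lemma Max_le_iff_sources: "Max ((\<lambda>i. As i (j i)) ` {..<I}) \<le> c \<longleftrightarrow> (\<forall>i<I. As i (j i) \<le> c)"
  using sources_nonempty by (subst Max_le_iff) auto

lemma superposition_le_Max:
  assumes "(\<Sum>i<I. j i) = n"
  shows "superposition I As n \<le> Max ((\<lambda>i. As i (j i)) ` {..<I})"
  unfolding superposition_def
proof (rule cInf_lower)
  have "0 \<le> Max ((\<lambda>i. As i (k i)) ` {..<I})" for k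
    using sources_nonempty As_nonneg by (intro order_trans[OF _ Max_ge[of _ "As 0 (k 0)"]]) auto
  then show "bdd_below {Max ((\<lambda>i. As i (k i)) ` {..<I}) |k. (\<Sum>i<I. k i) = n}"
    by (intro bdd_belowI[of _ 0]) auto
qed (use assms in blast)

lemma superposition_ge:
  assumes "\<And>k. (\<Sum>i<I. k i) = n \<Longrightarrow> c \<le> Max ((\<lambda>i. As i (k i)) ` {..<I})"
  shows "c \<le> superposition I As n"
  unfolding superposition_def
proof (rule cInf_greatest)
  have "(\<Sum>i<I. (if i = 0 then n else 0)) = n" using sources_nonempty by simp
  then show "{Max ((\<lambda>i. As i (k i)) ` {..<I}) |k. (\<Sum>i<I. k i) = n} \<noteq> {}" by blast
qed (use assms in blast)

lemma exists_split_below: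
  assumes "m \<le> (\<Sum>i<I. j i)" "\<forall>i<I. As i (j i) \<le> c"
  shows "\<exists>j'. (\<Sum>i<I. j' i) = m \<and> (\<forall>i<I. As i (j' i) \<le> c)"
proof -
  obtain j' where j': "\<forall>i. j' i \<le> j i" "(\<Sum>i<I. j' i) = m"
    using exists_pointwise_le_sum_eq[OF assms(1)] by blast
  have "As i (j' i) \<le> c" if "i < I" for i
    using monoD[OF As_mono[OF that] j'(1)[rule_format, of i]] assms(2) that by force
  with j' show ?thesis by blast
qed

lemma split_backoff:
  assumes split: "(\<Sum>i<I. k i) = n" and below_T: "\<forall>i<I. As i (k i) \<le> T"
    and "0 \<le> d"
    and d_le: "(\<Sum>i<I. lam i) * d \<le> real n - real m - ((\<Sum>i<I. nu i) + (real I - 1))"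
  shows "\<exists>j. m \<le> (\<Sum>i<I. j i) \<and> (\<forall>i<I. As i (j i) \<le> T - d)"
proof -
  have "(\<Sum>i<I. lam i) * T = (\<Sum>i<I. lam i * T)" by (simp add: sum_distrib_right)
  also have "\<dots> \<ge> (\<Sum>i<I. real (k i) - nu i)"
  proof (intro sum_mono)
    fix i assume "i \<in> {..<I}"
    then have i: "i < I" by simp
    have "real (k i) - nu i \<le> lam i * As i (k i)"
      using constrained_increment[OF constr[OF i] lam_pos[OF i], of 0 "k i"] As_0[OF i] by simp
    also have "\<dots> \<le> lam i * T" using below_T i lam_pos[OF i] by simp
    finally show "real (k i) - nu i \<le> lam i * T" .
  qed
  finally have "(\<Sum>i<I. lam i) * T \<ge> real n - (\<Sum>i<I. nu i)"
    using split by (simp add: sum_subtractf flip: of_nat_sum)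
  with d_le sources_nonempty have "(\<Sum>i<I. lam i) * d \<le> (\<Sum>i<I. lam i) * T" by linarith
  moreover have "0 < (\<Sum>i<I. lam i)" using sources_nonempty lam_pos by (intro sum_pos) auto
  ultimately have d_le_T: "d \<le> T" by simp
  define j where "j i = nat \<lfloor>real (k i) - nu i - lam i * d\<rfloor>" for i
  have "As i (j i) \<le> T - d" if i: "i < I" for i
  proof (cases "j i = 0")
    case True
    then show ?thesis using As_0[OF i] d_le_T by simp
  next
    case False
    then have j_le: "real (j i) \<le> real (k i) - nu i - lam i * d" unfolding j_def by linarith
    moreover have "0 \<le> lam i * d" using lam_pos[OF i] \<open>0 \<le> d\<close> by simp
    ultimately have "j i \<le> k i" using nu_nonneg[OF i] by linarith
    from constrained_increment[OF constr[OF i] lam_pos[OF i] this] j_le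
    have "lam i * d \<le> lam i * (As i (k i) - As i (j i))" by linarith
    then have "d \<le> As i (k i) - As i (j i)" using lam_pos[OF i] by simp
    with below_T i show ?thesis by force
  qed
  moreover have "m \<le> (\<Sum>i<I. j i)"
  proof -
    have "real n - (\<Sum>i<I. nu i) - (\<Sum>i<I. lam i) * d - real I
        = (\<Sum>i<I. real (k i) - nu i - lam i * d - 1)"
      using split by (simp add: sum_subtractf sum_distrib_right flip: of_nat_sum)
    also have "\<dots> < (\<Sum>i<I. real (j i))"
      using sources_nonempty by (intro sum_strict_mono) (auto simp: j_def, linarith)
    finally show ?thesis using d_le by (simp flip: of_nat_sum)
  qed
  ultimately show ?thesis by blast
qed

lemma superposition_constrained:
  "constrained (\<Sum>i<I. lam i) ((\<Sum>i<I. nu i) + (real I - 1)) (superposition I As)"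
  unfolding constrained_def
proof (intro allI impI)
  fix m n :: nat
  assume "m \<le> n"
  define L where "L = (\<Sum>i<I. lam i)"
  define V where "V = (\<Sum>i<I. nu i) + (real I - 1)"
  define d where "d = max (real n - real m - V) 0 / L"
  have "superposition I As m + d \<le> superposition I As n"
  proof (rule superposition_ge)
    fix k assume split: "(\<Sum>i<I. k i) = n"
    define T where "T = Max ((\<lambda>i. As i (k i)) ` {..<I})"
    have below_T: "\<forall>i<I. As i (k i) \<le> T" using Max_le_iff_sources T_def by blast
    obtain j where "m \<le> (\<Sum>i<I. j i)" "\<forall>i<I. As i (j i) \<le> T - d"
    proof (cases "real n - real m - V \<le> 0")
      case True
      then show ?thesis using that[of k] below_T split \<open>m \<le> n\<close> by (simp add: d_def)
    next
      case False
      have "0 < L" unfolding L_def using sources_nonempty lam_pos by (intro sum_pos) auto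
      with False have "0 \<le> d" "L * d \<le> real n - real m - V" by (simp_all add: d_def)
      with split_backoff[OF split below_T] that show ?thesis unfolding L_def V_def by blast
    qed
    with exists_split_below obtain j' where "(\<Sum>i<I. j' i) = m" "\<forall>i<I. As i (j' i) \<le> T - d"
      by blast
    with superposition_le_Max Max_le_iff_sources
    have "superposition I As m \<le> T - d" by (meson order_trans)
    then show "superposition I As m + d \<le> T" by simp
  qed
  then show "1 / (\<Sum>i<I. lam i) * max (real n - real m - ((\<Sum>i<I. nu i) + (real I - 1))) 0
      \<le> superposition I As n - superposition I As m"
    unfolding d_def L_def V_def by simp
qed

end

theorem theorem2:
  fixes I :: nat and As :: "nat \<Rightarrow> nat \<Rightarrow> real"
    and lam nu :: "nat \<Rightarrow> real"
  assumes "I \<ge> 2"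
    and "\<And>i. i < I \<Longrightarrow> arrival_process (As i)"
    and "\<And>i. i < I \<Longrightarrow> lam i > 0"
    and "\<And>i. i < I \<Longrightarrow> nu i \<ge> 0"
    and "\<And>i. i < I \<Longrightarrow> constrained (lam i) (nu i) (As i)"
  shows "constrained (\<Sum>i<I. lam i) ((\<Sum>i<I. nu i) + (real I - 1)) (superposition I As)"
proof -
  interpret constrained_arrivals I As lam nu
    using assms by unfold_locales auto
  show ?thesis by (rule superposition_constrained)
qed

end
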